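(* Let $\rho\in V_0$ be dominant. Then the linear map $\Psi:\mathcal B=\bigoplus_d\mathcal B_d\to\overline{\mathcal B}=\bigoplus_d\overline{\mathcal B}_d$ (induced by the isomorphisms $\mathcal B_d\to\overline{\mathcal B}_d$) is an isomorphism of algebras, and with $\psi:\mathcal P^W=\bigoplus_d\mathcal P^W_d\to\overline{\mathcal P}^W$ (induced by the isomorphisms $\mathcal P^W_d\to\overline{\mathcal P}^W_d$) one has $$\psi(Xh)=\Psi(X)\,\psi(h)\qquad\text{for all }X\in\mathcal B,\ h\in\mathcal P^W.$$
   Context: Setting: $V$ is a finite-dimensional complex vector space, $W\subseteq GL(V)$ a finite reflection group, $\Lambda_+\subseteq V$ a finitely generated submonoid whose minimal set of generators $\Sigma^\vee$ is a basis of $V$, and $\ell:V\to\mathbb C$ a $W$-invariant linear form with $\ell(\Lambda_+)\subseteq\mathbb N$; these data satisfy the axioms of F. Knop, "Construction of commuting difference operators for multiplicity free spaces" (the combinatorial data attached to multiplicity free representations). Notation: $\Gamma^\vee=\mathbb Z\Lambda_+$, $\Gamma\subseteq V^\vee$ its dual lattice, $\Sigma\subseteq V^\vee$ the dual basis of $\Sigma^\vee$, $\Phi=\bigcup_{w\in W}w\Sigma$, $\Delta\subseteq\Gamma$ the root system of $W$ with roots primitive in $\Gamma$, $\Delta^+=\{\alpha\in\Delta:\alpha(\Sigma^\vee)\ge0\}$, $\Lambda_1=\{w\eta:w\in W,\eta\in\Sigma^\vee,\ell(\eta)=1\}$. $V_0$ is the set of $\rho\in V$ with $\omega_1(\rho)=\omega_2(\rho)$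 whenever $\omega_1,\omega_2\in\Sigma$, $\omega_1\in\pm W\omega_2$; for $\rho\in V_0$, $\omega\in\pm\Phi$, $k_\omega:=\omega_1(\rho)$ with $\omega_1\in(\pm W\omega)\cap\Sigma$. $\rho\in V_0$ is dominant if $\alpha(\rho)\notin\mathbb Z_{<0}$ for all $\alpha\in\Delta^+$. $\mathcal P$ = polynomial functions on $V$. Known: for $\rho$ dominant and $\lambda\in\Lambda_+$ there is a unique $p_\lambda\in\mathcal P^W$ with $\deg p_\lambda\le\ell(\lambda)$ and $p_\lambda(\rho+\mu)=\delta_{\lambda\mu}$ for all $\mu\in\Lambda_+$ with $\ell(\mu)\le\ell(\lambda)$; the $p_\lambda$ with $\ell(\lambda)\le d$ form a basis of $\mathcal P^W_{\le d}=\{p\in\mathcal P^W:\deg p\le d\}$. Difference operators: $[z\downarrow d]=z(z-1)\cdots(z-d+1)$ for $d>0$, $=1$ otherwise; for $\tau\in\Gamma^\vee$, $f_\tau(z)=\prod_{\omega\in\Phi}[\omega(z)-k_\omega\downarrow\omega(\tau)]\big/\prod_{\alpha\in\Delta}[\alpha(z)\downarrow\alpha(\tau)]$; $(T_\eta f)(z)=f(z-\eta)$; $L=\sum_{\eta\in\Lambda_1}f_\eta(z)T_\eta$, which preserves $\mathcal P^W$; with $m_h$ multiplication by $h$, $D_h:=\sum_{n\ge0}\frac1{n!}(\mathrm{ad}L)^n(m_h)$ (finite sum) satisfies $D_h(p_\lambda)=h(\rho+\lambda)p_\lambda$; $E:=D_\ell=m_\ell-L$. For an operator $X$ on $\mathcal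 P^W$, $X^-(g):=(X(g^-))^-$ with $g^-(z)=g(-z)$; $\mathcal B$ is the algebra of operators on $\mathcal P^W$ generated by all $m_h$, $L$, $L^-$. Filtrations and gradings: $\overline{\mathcal P}^W_d=\mathcal P^W_{\le d}/\mathcal P^W_{\le d-1}$, $\overline{\mathcal P}^W=\bigoplus_d\overline{\mathcal P}^W_d$. For $X\in\mathcal B$, $\deg X:=\max\{\deg X(h)-\deg h: h\in\mathcal P^W\}$; $\mathcal B_{\le d}=\{X\in\mathcal B:\deg X\le d\}$, $\overline{\mathcal B}_d=\mathcal B_{\le d}/\mathcal B_{\le d-1}$, $\overline{\mathcal B}=\bigoplus_d\overline{\mathcal B}_d$ (the associated graded algebra, acting on $\overline{\mathcal P}^W$). $\mathcal P^W_d:=\{h\in\mathcal P^W:E(h)=(d+\ell(\rho))h\}$ (spanned by the $p_\lambda$ with $\ell(\lambda)=d$) and $\mathcal B_d:=\{X\in\mathcal B:[E,X]=dX\}$. It holds that $\mathcal P^W=\bigoplus_d\mathcal P^W_d$, $\mathcal P^W_{\le d}=\bigoplus_{i\le d}\mathcal P^W_i$, $\mathcal B=\bigoplus_d\mathcal B_d$ and $\mathcal B_{\le d}=\bigoplus_{i\le d}\mathcal B_i$, so the projections $\mathcal P^W_d\to\overline{\mathcal P}^W_d$ and $\mathcal B_d\to\overline{\mathcal B}_d$ are isomorphisms. *)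

theory Defs
  imports "HOL-Analysis.Analysis" "HOL-Library.Function_Algebras"
begin

(* Coordinates: V = complex^'n, with the basis Sigma^vee = the standard basis (axis i 1).
   Linear forms on V are represented by their coefficient vectors c, acting by pair c x. *)

type_synonym 'n fn = "complex^'n \<Rightarrow> complex"
type_synonym 'n op = "'n fn \<Rightarrow> 'n fn"

definition pair :: "complex^'n \<Rightarrow> complex^'n \<Rightarrow> complex" where
  "pair c x = (\<Sum>i\<in>UNIV. c$i * x$i)"

definition is_reflection :: "complex^'n^'n \<Rightarrow> bool" where
  "is_reflection s \<longleftrightarrow> s ** s = mat 1 \<and> s \<noteq> mat 1 \<and>
     (\<exists>a. a \<noteq> 0 \<and> {x. s *v x = x} = {x. pair a x = 0})"

inductive_set gen_by :: "(complex^'n^'n) set \<Rightarrow> (complex^'n^'n) set" for S where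
  gen_one: "mat 1 \<in> gen_by S"
| gen_mult: "s \<in> S \<Longrightarrow> w \<in> gen_by S \<Longrightarrow> s ** w \<in> gen_by S"

definition finite_reflection_group :: "(complex^'n^'n) set \<Rightarrow> bool" where
  "finite_reflection_group W \<longleftrightarrow> finite W \<and> mat 1 \<in> W \<and>
     (\<forall>a\<in>W. \<forall>b\<in>W. a ** b \<in> W) \<and> W = gen_by {s\<in>W. is_reflection s}"

(* Gamma^vee = Z Lambda_+ (integer coordinate vectors); Gamma = its dual lattice
   (integer coefficient linear forms); Lambda_+ = monoid generated by the basis Sigma^vee *)
definition Gamma :: "(complex^'n) set" where
  "Gamma = {c. \<forall>i. c$i \<in> \<int>}"

definition Lambda_plus :: "(complex^'n) set" where
  "Lambda_plus = {x. \<forall>i. x$i \<in> \<nat>}"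

definition primitive :: "complex^'n \<Rightarrow> bool" where
  "primitive \<alpha> \<longleftrightarrow> \<alpha> \<in> Gamma \<and> \<alpha> \<noteq> 0 \<and>
     (\<forall>\<beta>\<in>Gamma. \<forall>k::int. \<alpha> = of_int k *s \<beta> \<longrightarrow> \<bar>k\<bar> = 1)"

definition roots :: "(complex^'n^'n) set \<Rightarrow> (complex^'n) set" where
  "roots W = {\<alpha>. primitive \<alpha> \<and>
      (\<exists>s\<in>W. is_reflection s \<and> {x. s *v x = x} = {x. pair \<alpha> x = 0})}"

definition pos_roots :: "(complex^'n^'n) set \<Rightarrow> (complex^'n) set" where
  "pos_roots W = {\<alpha>\<in>roots W. \<forall>i. 0 \<le> Re (pair \<alpha> (axis i 1))}"

(* w acts on linear forms by (w omega)(x) = omega(w^{-1} x); as W is a group,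
   the orbit W omega is {omega v* w | w in W} *)
definition orbit :: "(complex^'n^'n) set \<Rightarrow> complex^'n \<Rightarrow> (complex^'n) set" where
  "orbit W \<omega> = {\<omega> v* w | w. w \<in> W}"

definition pm_orbit :: "(complex^'n^'n) set \<Rightarrow> complex^'n \<Rightarrow> (complex^'n) set" where
  "pm_orbit W \<omega> = orbit W \<omega> \<union> uminus ` orbit W \<omega>"

definition Phi :: "(complex^'n^'n) set \<Rightarrow> (complex^'n) set" where
  "Phi W = (\<Union>i. orbit W (axis i 1))"

definition V0 :: "(complex^'n^'n) set \<Rightarrow> (complex^'n) set" where
  "V0 W = {\<rho>. \<forall>i j. axis i 1 \<in> pm_orbit W (axis j 1) \<longrightarrow> \<rho>$i = \<rho>$j}"

(* k_omega = omega_1(rho) for omega_1 in (pm W omega) \<inter> Sigma *)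
definition kk :: "(complex^'n^'n) set \<Rightarrow> complex^'n \<Rightarrow> complex^'n \<Rightarrow> complex" where
  "kk W \<rho> \<omega> = \<rho> $ (SOME i. axis i 1 \<in> pm_orbit W \<omega>)"

definition dominant :: "(complex^'n^'n) set \<Rightarrow> complex^'n \<Rightarrow> bool" where
  "dominant W \<rho> \<longleftrightarrow> \<rho> \<in> V0 W \<and>
     (\<forall>\<alpha>\<in>pos_roots W. \<not> (\<exists>k::int. k < 0 \<and> pair \<alpha> \<rho> = of_int k))"

definition Lambda1 :: "(complex^'n^'n) set \<Rightarrow> complex^'n \<Rightarrow> (complex^'n) set" where
  "Lambda1 W l = {w *v axis i 1 | w i. w \<in> W \<and> pair l (axis i 1) = 1}"

definition ff :: "complex \<Rightarrow> int \<Rightarrow> complex" where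
  "ff z d = (if d > 0 then (\<Prod>j\<in>{0..<nat d}. z - of_nat j) else 1)"

(* the exponent omega(tau) (an integer in the intended situation) *)
definition ival :: "complex \<Rightarrow> int" where
  "ival c = \<lfloor>Re c\<rfloor>"

definition fnum :: "(complex^'n^'n) set \<Rightarrow> complex^'n \<Rightarrow> complex^'n \<Rightarrow> 'n fn" where
  "fnum W \<rho> \<tau> z = (\<Prod>\<omega>\<in>Phi W. ff (pair \<omega> z - kk W \<rho> \<omega>) (ival (pair \<omega> \<tau>)))"

definition fden :: "(complex^'n^'n) set \<Rightarrow> complex^'n \<Rightarrow> 'n fn" where
  "fden W \<tau> z = (\<Prod>\<alpha>\<in>roots W. ff (pair \<alpha> z) (ival (pair \<alpha> \<tau>)))"

definition ftau :: "(complex^'n^'n) set \<Rightarrow> complex^'n \<Rightarrow> complex^'n \<Rightarrow> 'n fn" where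
  "ftau W \<rho> \<tau> z = fnum W \<rho> \<tau> z / fden W \<tau> z"

definition Lformula :: "(complex^'n^'n) set \<Rightarrow> complex^'n \<Rightarrow> complex^'n \<Rightarrow> 'n fn \<Rightarrow> 'n fn" where
  "Lformula W l \<rho> p z = (\<Sum>\<eta>\<in>Lambda1 W l. ftau W \<rho> \<eta> z * p (z - \<eta>))"

definition regular_pt :: "(complex^'n^'n) set \<Rightarrow> complex^'n \<Rightarrow> complex^'n \<Rightarrow> bool" where
  "regular_pt W l z \<longleftrightarrow> (\<forall>\<eta>\<in>Lambda1 W l. fden W \<eta> z \<noteq> 0)"

definition mono :: "(('n::finite) \<Rightarrow> nat) \<Rightarrow> 'n fn" where
  "mono a x = (\<Prod>i\<in>UNIV. (x$i) ^ a i)"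

definition poly_le :: "int \<Rightarrow> ('n::finite) fn set" where
  "poly_le d = {p. \<exists>c. p = (\<lambda>x. \<Sum>a\<in>{a::'n\<Rightarrow>nat. int (sum a UNIV) \<le> d}. c a * mono a x)}"

definition Polys :: "('n::finite) fn set" where
  "Polys = (\<Union>d. poly_le d)"

definition PW :: "(complex^('n::finite)^'n) set \<Rightarrow> 'n fn set" where
  "PW W = {p\<in>Polys. \<forall>w\<in>W. \<forall>x. p (w *v x) = p x}"

definition PWle :: "(complex^('n::finite)^'n) set \<Rightarrow> int \<Rightarrow> 'n fn set" where
  "PWle W d = PW W \<inter> poly_le d"

definition Lop :: "(complex^('n::finite)^'n) set \<Rightarrow> complex^'n \<Rightarrow> complex^'n \<Rightarrow> 'n op" where
  "Lop W l \<rho> p = (THE q. q \<in> Polys \<and> (\<forall>z. regular_pt W l z \<longrightarrow> q z = Lformula W l \<rho> p z))"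

definition L_preserves :: "(complex^('n::finite)^'n) set \<Rightarrow> complex^'n \<Rightarrow> complex^'n \<Rightarrow> bool" where
  "L_preserves W l \<rho> \<longleftrightarrow> (\<forall>p\<in>PW W. \<exists>q\<in>PW W. \<forall>z. regular_pt W l z \<longrightarrow> q z = Lformula W l \<rho> p z)"

(* operators on P^W, normalized to be 0 outside P^W *)
definition restr :: "(complex^('n::finite)^'n) set \<Rightarrow> 'n op \<Rightarrow> 'n op" where
  "restr W X = (\<lambda>g. if g \<in> PW W then X g else 0)"

definition negf :: "('n::finite) fn \<Rightarrow> 'n fn" where
  "negf g = (\<lambda>z. g (- z))"

definition Lminus :: "(complex^('n::finite)^'n) set \<Rightarrow> complex^'n \<Rightarrow> complex^'n \<Rightarrow> 'n op" where
  "Lminus W l \<rho> g = negf (Lop W l \<rho> (negf g))"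

definition mult :: "('n::finite) fn \<Rightarrow> 'n op" where
  "mult h g = (\<lambda>z. h z * g z)"

definition op_smul :: "complex \<Rightarrow> ('n::finite) op \<Rightarrow> 'n op" where
  "op_smul c X = (\<lambda>g z. c * X g z)"

definition op_comp :: "(complex^('n::finite)^'n) set \<Rightarrow> 'n op \<Rightarrow> 'n op \<Rightarrow> 'n op" where
  "op_comp W X Y = restr W (X \<circ> Y)"

inductive_set Balg :: "(complex^('n::finite)^'n) set \<Rightarrow> complex^'n \<Rightarrow> complex^'n \<Rightarrow> 'n op set"
  for W l \<rho> where
  B_mult: "h \<in> PW W \<Longrightarrow> restr W (mult h) \<in> Balg W l \<rho>"
| B_L: "restr W (Lop W l \<rho>) \<in> Balg W l \<rho>"
| B_Lminus: "restr W (Lminus W l \<rho>) \<in> Balg W l \<rho>"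
| B_add: "X \<in> Balg W l \<rho> \<Longrightarrow> Y \<in> Balg W l \<rho> \<Longrightarrow> X + Y \<in> Balg W l \<rho>"
| B_smul: "X \<in> Balg W l \<rho> \<Longrightarrow> op_smul c X \<in> Balg W l \<rho>"
| B_comp: "X \<in> Balg W l \<rho> \<Longrightarrow> Y \<in> Balg W l \<rho> \<Longrightarrow> op_comp W X Y \<in> Balg W l \<rho>"

definition Eop :: "(complex^('n::finite)^'n) set \<Rightarrow> complex^'n \<Rightarrow> complex^'n \<Rightarrow> 'n op" where
  "Eop W l \<rho> = restr W (\<lambda>g. mult (pair l) g - Lop W l \<rho> g)"

definition Pd :: "(complex^('n::finite)^'n) set \<Rightarrow> complex^'n \<Rightarrow> complex^'n \<Rightarrow> int \<Rightarrow> 'n fn set" where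
  "Pd W l \<rho> d = {h\<in>PW W. Eop W l \<rho> h = (\<lambda>z. (of_int d + pair l \<rho>) * h z)}"

definition Bd :: "(complex^('n::finite)^'n) set \<Rightarrow> complex^'n \<Rightarrow> complex^'n \<Rightarrow> int \<Rightarrow> 'n op set" where
  "Bd W l \<rho> d = {X\<in>Balg W l \<rho>.
      op_comp W (Eop W l \<rho>) X - op_comp W X (Eop W l \<rho>) = op_smul (of_int d) X}"

definition Ble :: "(complex^('n::finite)^'n) set \<Rightarrow> complex^'n \<Rightarrow> complex^'n \<Rightarrow> int \<Rightarrow> 'n op set" where
  "Ble W l \<rho> d = {X\<in>Balg W l \<rho>. \<forall>e h. h \<in> PWle W e \<longrightarrow> X h \<in> PWle W (e + d)}"

definition is_decomp :: "(int \<Rightarrow> 'a::comm_monoid_add set) \<Rightarrow> (int \<Rightarrow> 'a) \<Rightarrow> 'a \<Rightarrow> bool" where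
  "is_decomp A c x \<longleftrightarrow> (\<forall>i. c i \<in> A i) \<and> finite {i. c i \<noteq> 0} \<and> x = (\<Sum>i\<in>{i. c i \<noteq> 0}. c i)"

definition comp :: "(int \<Rightarrow> 'a::comm_monoid_add set) \<Rightarrow> 'a \<Rightarrow> int \<Rightarrow> 'a" where
  "comp A x = (THE c. is_decomp A c x)"

definition P_decomp :: "(complex^('n::finite)^'n) set \<Rightarrow> complex^'n \<Rightarrow> complex^'n \<Rightarrow> bool" where
  "P_decomp W l \<rho> \<longleftrightarrow> (\<forall>h\<in>PW W. \<exists>!c. is_decomp (Pd W l \<rho>) c h) \<and>
     (\<forall>d. PWle W d = {h. \<exists>c. is_decomp (Pd W l \<rho>) c h \<and> (\<forall>i>d. c i = 0)})"

definition B_decomp :: "(complex^('n::finite)^'n) set \<Rightarrow> complex^'n \<Rightarrow> complex^'n \<Rightarrow> bool" where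
  "B_decomp W l \<rho> \<longleftrightarrow> (\<forall>X\<in>Balg W l \<rho>. \<exists>!c. is_decomp (Bd W l \<rho>) c X) \<and>
     (\<forall>d. Ble W l \<rho> d = {X. \<exists>c. is_decomp (Bd W l \<rho>) c X \<and> (\<forall>i>d. c i = 0)})"

(* associated graded objects; elements of \<overline>P^W_d resp. \<overline>B_d are cosets *)
definition rep :: "'a set \<Rightarrow> 'a" where
  "rep A = (SOME x. x \<in> A)"

definition pcos :: "(complex^('n::finite)^'n) set \<Rightarrow> int \<Rightarrow> 'n fn \<Rightarrow> 'n fn set" where
  "pcos W d h = {h + k | k. k \<in> PWle W (d - 1)}"

definition bcos :: "(complex^('n::finite)^'n) set \<Rightarrow> complex^'n \<Rightarrow> complex^'n \<Rightarrow> int \<Rightarrow> 'n op \<Rightarrow> 'n op set" where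
  "bcos W l \<rho> d X = {X + Y | Y. Y \<in> Ble W l \<rho> (d - 1)}"

definition bsupp :: "(complex^('n::finite)^'n) set \<Rightarrow> complex^'n \<Rightarrow> complex^'n \<Rightarrow> (int \<Rightarrow> 'n op set) \<Rightarrow> int set" where
  "bsupp W l \<rho> a = {d. a d \<noteq> Ble W l \<rho> (d - 1)}"

definition Bbar :: "(complex^('n::finite)^'n) set \<Rightarrow> complex^'n \<Rightarrow> complex^'n \<Rightarrow> (int \<Rightarrow> 'n op set) set" where
  "Bbar W l \<rho> = {a. (\<forall>d. \<exists>X\<in>Ble W l \<rho> d. a d = bcos W l \<rho> d X) \<and> finite (bsupp W l \<rho> a)}"

definition badd :: "(complex^('n::finite)^'n) set \<Rightarrow> complex^'n \<Rightarrow> complex^'n \<Rightarrow>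
    (int \<Rightarrow> 'n op set) \<Rightarrow> (int \<Rightarrow> 'n op set) \<Rightarrow> (int \<Rightarrow> 'n op set)" where
  "badd W l \<rho> a b = (\<lambda>d. bcos W l \<rho> d (rep (a d) + rep (b d)))"

definition bsmul :: "(complex^('n::finite)^'n) set \<Rightarrow> complex^'n \<Rightarrow> complex^'n \<Rightarrow>
    complex \<Rightarrow> (int \<Rightarrow> 'n op set) \<Rightarrow> (int \<Rightarrow> 'n op set)" where
  "bsmul W l \<rho> c a = (\<lambda>d. bcos W l \<rho> d (op_smul c (rep (a d))))"

definition bmul :: "(complex^('n::finite)^'n) set \<Rightarrow> complex^'n \<Rightarrow> complex^'n \<Rightarrow>
    (int \<Rightarrow> 'n op set) \<Rightarrow> (int \<Rightarrow> 'n op set) \<Rightarrow> (int \<Rightarrow> 'n op set)" where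
  "bmul W l \<rho> a b = (\<lambda>d. bcos W l \<rho> d
      (\<Sum>i\<in>bsupp W l \<rho> a. op_comp W (rep (a i)) (rep (b (d - i)))))"

definition bone :: "(complex^('n::finite)^'n) set \<Rightarrow> complex^'n \<Rightarrow> complex^'n \<Rightarrow> (int \<Rightarrow> 'n op set)" where
  "bone W l \<rho> = (\<lambda>d. if d = 0 then bcos W l \<rho> 0 (restr W id) else Ble W l \<rho> (d - 1))"

definition bact :: "(complex^('n::finite)^'n) set \<Rightarrow> complex^'n \<Rightarrow> complex^'n \<Rightarrow>
    (int \<Rightarrow> 'n op set) \<Rightarrow> (int \<Rightarrow> 'n fn set) \<Rightarrow> (int \<Rightarrow> 'n fn set)" where
  "bact W l \<rho> a u = (\<lambda>e. pcos W e (\<Sum>d\<in>bsupp W l \<rho> a. rep (a d) (rep (u (e - d)))))"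

definition Psi :: "(complex^('n::finite)^'n) set \<Rightarrow> complex^'n \<Rightarrow> complex^'n \<Rightarrow> 'n op \<Rightarrow> (int \<Rightarrow> 'n op set)" where
  "Psi W l \<rho> X = (\<lambda>d. bcos W l \<rho> d (comp (Bd W l \<rho>) X d))"

definition psi :: "(complex^('n::finite)^'n) set \<Rightarrow> complex^'n \<Rightarrow> complex^'n \<Rightarrow> 'n fn \<Rightarrow> (int \<Rightarrow> 'n fn set)" where
  "psi W l \<rho> h = (\<lambda>d. pcos W d (comp (Pd W l \<rho>) h d))"

definition knop_data :: "(complex^('n::finite)^'n) set \<Rightarrow> complex^'n \<Rightarrow> bool" where
  "knop_data W l \<longleftrightarrow> finite_reflection_group W \<and>
     (\<forall>w\<in>W. \<forall>x. pair l (w *v x) = pair l x) \<and> (\<forall>x\<in>Lambda_plus. pair l x \<in> \<nat>)"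

end

theory Submission
  imports Defs
begin

(* The eigenspace gradings of B (under ad E) and of P^W (under E) split the degree
   filtrations: B_{<=d} is the sum of the B_i with i <= d, and likewise for P^W.  For any such
   filtered direct sum, sending x to the classes of its homogeneous components is a bijection
   onto the associated graded group, and it is additive.  A biadditive pairing mapping
   M_i x N_j into N_{i+j} and M_{<=a} x N_{<=b} into N_{<=a+b} descends to the associated
   graded objects: the degree e component of x y is the sum of the x_i y_{e-i}, and changing
   x_i, y_{e-i} by terms of lower filtration changes it only by a term in N_{<=e-1}.
   Composition in B and the action of B on P^W are such pairings, since [E, -] is a
   derivation.  Linearity of L, needed throughout, holds because L p is the polynomial that
   agrees with the defining formula away from finitely many hyperplanes. *)

section \<open>Polynomials are determined by their values at regular points\<close>

lemma pair_add: "pair a (x + y) = pair a x + pair a y"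
  unfolding pair_def by (simp add: algebra_simps sum.distrib)

lemma pair_scaleR: "pair a (r *\<^sub>R x) = of_real r * pair a x"
  unfolding pair_def vector_scaleR_component
  by (simp add: scaleR_conv_of_real sum_distrib_left algebra_simps)

lemma pair_axis: "pair a (axis i 1) = a $ i"
  unfolding pair_def axis_def by (simp add: if_distrib cong: if_cong)

lemma continuous_on_pair: "continuous_on S (pair a)"
  unfolding pair_def by (intro continuous_intros)

lemma closed_pair_level_set: "closed {z. pair a z = c}"
  by (intro closed_Collect_eq continuous_on_pair continuous_on_const)

lemma interior_pair_level_set:
  assumes "a \<noteq> 0"
  shows "interior {z. pair a z = c} = {}"
proof (rule ccontr)
  assume "interior {z. pair a z = c} \<noteq> {}"
  then obtain z e where e: "e > 0" "ball z e \<subseteq> {z. pair a z = c}"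
    by (metis equals0I mem_interior)
  obtain i where i: "a $ i \<noteq> 0"
    using assms by (metis vec_eq_iff zero_index)
  let ?z' = "z + (e / 2) *\<^sub>R axis i 1"
  have "norm (axis i (1::complex)) = 1"
    by (simp add: inner_axis' norm_eq_1)
  then have "?z' \<in> ball z e"
    using e by (simp add: dist_norm)
  moreover have "z \<in> ball z e"
    using e by simp
  ultimately have "pair a ?z' = pair a z"
    using e(2) by blast
  then show False
    using i e by (simp add: pair_add pair_scaleR pair_axis)
qed

lemma interior_Union_closed_empty:
  assumes "finite F" "\<And>S. S \<in> F \<Longrightarrow> closed S" "\<And>S. S \<in> F \<Longrightarrow> interior S = {}"
  shows "interior (\<Union>F) = {}"
  using assms by (induction F rule: finite_induct) (auto simp: interior_closed_Un_empty_interior)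

lemma continuous_eq_off_nowhere_dense:
  fixes f g :: "'a::topological_space \<Rightarrow> 'b::t2_space"
  assumes "finite F" "\<And>S. S \<in> F \<Longrightarrow> closed S" "\<And>S. S \<in> F \<Longrightarrow> interior S = {}"
    and "\<And>z. z \<notin> \<Union>F \<Longrightarrow> f z = g z"
    and "continuous_on UNIV f" "continuous_on UNIV g"
  shows "f = g"
proof -
  have "closure (- \<Union>F) = UNIV"
    using interior_Union_closed_empty[OF assms(1-3)] by (simp add: closure_complement)
  moreover have "closure (- \<Union>F) \<subseteq> {z. f z = g z}"
    using assms(4-6) by (intro closure_minimal closed_Collect_eq) auto
  ultimately show ?thesis
    by auto
qed

lemma finite_Lambda1: "finite W \<Longrightarrow> finite (Lambda1 W l)"
proof -
  assume "finite W"
  moreover have "Lambda1 W l \<subseteq> (\<lambda>(w, i). w *v axis i 1) ` (W \<times> UNIV)"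
    unfolding Lambda1_def by auto
  ultimately show ?thesis
    by (auto intro: finite_subset)
qed

lemma roots_nonzero: "\<alpha> \<in> roots W \<Longrightarrow> \<alpha> \<noteq> 0"
  unfolding roots_def primitive_def by auto

lemma ff_eq_0D: "ff x k = 0 \<Longrightarrow> \<exists>j. j < nat k \<and> x = of_nat j"
  unfolding ff_def by (auto split: if_splits)

text \<open>Irregular points lie on the finitely many hyperplanes \<open>\<alpha> = j\<close> with \<open>\<alpha>\<close> a root and
  \<open>j < \<alpha>(\<eta>)\<close> for some \<open>\<eta> \<in> \<Lambda>\<^sub>1\<close>.\<close>

lemma continuous_eq_if_eq_at_regular_pts:
  fixes f g :: "('n::finite) fn"
  assumes W: "finite W" and f: "continuous_on UNIV f" and g: "continuous_on UNIV g"
    and eq: "\<And>z. regular_pt W l z \<Longrightarrow> f z = g z"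
  shows "f = g"
proof (cases "finite (roots W)")
  case False
  then have "regular_pt W l z" for z
    by (simp add: regular_pt_def fden_def)
  with eq show ?thesis
    by auto
next
  case True
  define P where "P = (\<Union>\<eta>\<in>Lambda1 W l. SIGMA \<alpha>:roots W. {..<nat (ival (pair \<alpha> \<eta>))})"
  define F where "F = (\<lambda>(\<alpha>, j). {z. pair \<alpha> z = of_nat j}) ` P"
  have "finite F"
    unfolding F_def P_def using True finite_Lambda1[OF W] by auto
  moreover have "closed S" "interior S = {}" if S: "S \<in> F" for S
  proof -
    obtain \<alpha> j where "\<alpha> \<in> roots W" "S = {z. pair \<alpha> z = of_nat j}"
      using S unfolding F_def P_def by force
    then show "closed S" "interior S = {}"
      by (simp_all add: closed_pair_level_set interior_pair_level_set roots_nonzero)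
  qed
  moreover have "regular_pt W l z" if z: "z \<notin> \<Union>F" for z
    unfolding regular_pt_def
  proof (intro ballI notI)
    fix \<eta> assume \<eta>: "\<eta> \<in> Lambda1 W l" and "fden W \<eta> z = 0"
    then obtain \<alpha> where \<alpha>: "\<alpha> \<in> roots W" "ff (pair \<alpha> z) (ival (pair \<alpha> \<eta>)) = 0"
      using True by (auto simp: fden_def)
    then obtain j where "j < nat (ival (pair \<alpha> \<eta>))" "pair \<alpha> z = of_nat j"
      using ff_eq_0D by blast
    then have "z \<in> \<Union>F"
      unfolding F_def P_def using \<alpha> \<eta> by force
    with z show False
      by simp
  qed
  ultimately show ?thesis
    using continuous_eq_off_nowhere_dense[of F f g] eq f g by blast
qed

section \<open>Polynomial functions\<close>

definition fn_smul :: "complex \<Rightarrow> ('n::finite) fn \<Rightarrow> 'n fn" where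
  "fn_smul c g = (\<lambda>z. c * g z)"

lemma fn_smul_minus_one: "fn_smul (-1) g = - g"
  unfolding fn_smul_def by (simp add: fun_eq_iff)

lemma continuous_on_Polys: "p \<in> Polys \<Longrightarrow> continuous_on S p"
  unfolding Polys_def poly_le_def mono_def by (auto intro!: continuous_intros)

lemma mono_uminus: "mono a (- x) = (-1) ^ sum a UNIV * mono a x"
proof -
  have "mono a (- x) = (\<Prod>i\<in>UNIV. (-1) ^ a i * (x $ i) ^ a i)"
    unfolding mono_def by (intro prod.cong refl) (simp add: power_minus[of "x $ _"])
  also have "\<dots> = (\<Prod>i\<in>UNIV. (-1::complex) ^ a i) * mono a x"
    unfolding mono_def by (rule prod.distrib)
  finally show ?thesis
    by (simp add: power_sum)
qed

lemma poly_le_add: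
  assumes "p \<in> poly_le d" "q \<in> poly_le d"
  shows "p + q \<in> poly_le d"
proof -
  obtain c c' where "p = (\<lambda>x. \<Sum>a\<in>{a::'a\<Rightarrow>nat. int (sum a UNIV) \<le> d}. c a * mono a x)"
    and "q = (\<lambda>x. \<Sum>a\<in>{a::'a\<Rightarrow>nat. int (sum a UNIV) \<le> d}. c' a * mono a x)"
    using assms unfolding poly_le_def by blast
  then show ?thesis
    unfolding poly_le_def
    by (auto intro!: exI[of _ "\<lambda>a. c a + c' a"] simp: algebra_simps sum.distrib)
qed

lemma poly_le_fn_smul:
  assumes "p \<in> poly_le d"
  shows "fn_smul k p \<in> poly_le d"
proof -
  obtain c where "p = (\<lambda>x. \<Sum>a\<in>{a::'a\<Rightarrow>nat. int (sum a UNIV) \<le> d}. c a * mono a x)"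
    using assms unfolding poly_le_def by blast
  then show ?thesis
    unfolding poly_le_def fn_smul_def
    by (auto intro!: exI[of _ "\<lambda>a. k * c a"] simp: algebra_simps sum_distrib_left)
qed

lemma poly_le_negf:
  assumes "p \<in> poly_le d"
  shows "negf p \<in> poly_le d"
proof -
  obtain c where "p = (\<lambda>x. \<Sum>a\<in>{a::'a\<Rightarrow>nat. int (sum a UNIV) \<le> d}. c a * mono a x)"
    using assms unfolding poly_le_def by blast
  then show ?thesis
    unfolding poly_le_def negf_def
    by (auto intro!: exI[of _ "\<lambda>a. c a * (-1) ^ sum a UNIV"] simp: mono_uminus algebra_simps)
qed

lemma zero_poly_le: "(0::('n::finite) fn) \<in> poly_le d"
  unfolding poly_le_def by (auto intro!: exI[of _ "\<lambda>_. 0"])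

lemma one_poly_le_0: "(1::('n::finite) fn) \<in> poly_le 0"
proof -
  have "{a::'n\<Rightarrow>nat. int (sum a UNIV) \<le> 0} = {\<lambda>_. 0}"
  proof (intro equalityI subsetI)
    fix a :: "'n \<Rightarrow> nat"
    assume "a \<in> {a. int (sum a UNIV) \<le> 0}"
    then have "sum a UNIV = 0"
      by (simp only: mem_Collect_eq of_nat_le_0_iff)
    then show "a \<in> {\<lambda>_. 0}"
      by (simp add: fun_eq_iff)
  qed simp
  then show ?thesis
    unfolding poly_le_def by (auto intro!: exI[of _ "\<lambda>_. 1"] simp: mono_def fun_eq_iff)
qed

lemma PWle_add: "p \<in> PWle W d \<Longrightarrow> q \<in> PWle W d \<Longrightarrow> p + q \<in> PWle W d"
  unfolding PWle_def PW_def Polys_def using poly_le_add by fastforce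

lemma PWle_fn_smul: "p \<in> PWle W d \<Longrightarrow> fn_smul c p \<in> PWle W d"
  unfolding PWle_def PW_def Polys_def using poly_le_fn_smul by (fastforce simp: fn_smul_def)

lemma zero_PWle: "0 \<in> PWle W d"
  unfolding PWle_def PW_def Polys_def using zero_poly_le by fastforce

lemma one_PW: "1 \<in> PW W"
  unfolding PW_def Polys_def using one_poly_le_0 by fastforce

lemma PW_ex_PWle: "p \<in> PW W \<Longrightarrow> \<exists>d. p \<in> PWle W d"
  unfolding PW_def PWle_def Polys_def by auto

lemma PW_negf:
  assumes "p \<in> PW W"
  shows "negf p \<in> PW W"
proof -
  have "negf p (w *v x) = negf p x" if "w \<in> W" for w x
  proof -
    have "w *v (- x) = - (w *v x)"
      by (simp add: vec_eq_iff matrix_vector_mult_def sum_negf)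
    moreover have "p (w *v (- x)) = p (- x)"
      using assms that unfolding PW_def by blast
    ultimately show ?thesis
      unfolding negf_def by simp
  qed
  moreover have "negf p \<in> Polys"
    using assms poly_le_negf unfolding PW_def Polys_def by blast
  ultimately show ?thesis
    unfolding PW_def by blast
qed

section \<open>Filtered direct sums and their associated graded groups\<close>

lemma is_decompI:
  assumes "\<And>i. c i \<in> A i" "finite S" "{i. c i \<noteq> 0} \<subseteq> S" "x = (\<Sum>i\<in>S. c i)"
  shows "is_decomp A c x"
proof -
  have "(\<Sum>i\<in>S. c i) = (\<Sum>i\<in>{i. c i \<noteq> 0}. c i)"
    by (rule sum.mono_neutral_right) (use assms in auto)
  then show ?thesis
    unfolding is_decomp_def using assms finite_subset by auto
qed

lemma is_decomp_bounded:
  assumes "is_decomp A c x"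
  shows "\<exists>d. \<forall>i>d. c i = 0"
proof -
  have "finite {i. c i \<noteq> 0}"
    using assms by (simp add: is_decomp_def)
  then have "\<forall>i>Max (insert 0 {i. c i \<noteq> 0}). c i = 0"
    by (meson Max_ge finite_insert insertCI mem_Collect_eq not_le)
  then show ?thesis
    by blast
qed

lemma sum_antidiagonal:
  fixes F :: "int \<Rightarrow> int \<Rightarrow> 'a::comm_monoid_add"
  assumes "finite I" "finite J" "\<And>i j. j \<notin> J \<Longrightarrow> F i j = 0"
  shows "(\<Sum>p\<in>{p\<in>I \<times> J. fst p + snd p = e}. F (fst p) (snd p)) = (\<Sum>i\<in>I. F i (e - i))"
proof -
  have "(\<Sum>i\<in>I. F i (e - i)) = (\<Sum>i\<in>{i\<in>I. e - i \<in> J}. F i (e - i))"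
    by (rule sum.mono_neutral_right) (use assms in auto)
  also have "\<dots> = (\<Sum>p\<in>(\<lambda>i. (i, e - i)) ` {i\<in>I. e - i \<in> J}. F (fst p) (snd p))"
    by (subst sum.reindex) (auto simp: inj_on_def)
  also have "(\<lambda>i. (i, e - i)) ` {i\<in>I. e - i \<in> J} = {p\<in>I \<times> J. fst p + snd p = e}"
    by (auto simp: image_iff)
  finally show ?thesis
    by simp
qed

locale filtered_direct_sum =
  fixes A :: "int \<Rightarrow> 'a::ab_group_add set" and M :: "'a set" and Le :: "int \<Rightarrow> 'a set"
  assumes decomp_unique: "x \<in> M \<Longrightarrow> \<exists>!c. is_decomp A c x"
    and Le_eq: "Le d = {x. \<exists>c. is_decomp A c x \<and> (\<forall>i>d. c i = 0)}"
    and A_M: "x \<in> A i \<Longrightarrow> x \<in> M"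
    and Le_M: "x \<in> Le d \<Longrightarrow> x \<in> M"
    and zero_Le: "0 \<in> Le d"
    and A_add: "x \<in> A i \<Longrightarrow> y \<in> A i \<Longrightarrow> x + y \<in> A i"
    and A_uminus: "x \<in> A i \<Longrightarrow> - x \<in> A i"
    and M_add: "x \<in> M \<Longrightarrow> y \<in> M \<Longrightarrow> x + y \<in> M"
    and M_uminus: "x \<in> M \<Longrightarrow> - x \<in> M"
begin

lemma zero_M: "0 \<in> M"
  using Le_M zero_Le by blast

lemma M_diff: "x \<in> M \<Longrightarrow> y \<in> M \<Longrightarrow> x - y \<in> M"
  using M_add M_uminus by (metis diff_conv_add_uminus)

lemma M_sum: "finite S \<Longrightarrow> (\<And>k. k \<in> S \<Longrightarrow> f k \<in> M) \<Longrightarrow> sum f S \<in> M"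
  by (induction S rule: finite_induct) (auto intro: zero_M M_add)

lemma comp_eq: "x \<in> M \<Longrightarrow> is_decomp A c x \<Longrightarrow> comp A x = c"
  unfolding comp_def using decomp_unique by (metis the_equality)

lemma comp_is_decomp: "x \<in> M \<Longrightarrow> is_decomp A (comp A x) x"
  unfolding comp_def using decomp_unique by (metis theI')

lemma comp_in: "x \<in> M \<Longrightarrow> comp A x i \<in> A i"
  using comp_is_decomp unfolding is_decomp_def by blast

lemma comp_finite: "x \<in> M \<Longrightarrow> finite {i. comp A x i \<noteq> 0}"
  using comp_is_decomp unfolding is_decomp_def by blast

lemma sum_comp: "x \<in> M \<Longrightarrow> (\<Sum>i\<in>{i. comp A x i \<noteq> 0}. comp A x i) = x"
  using comp_is_decomp unfolding is_decomp_def by metis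

lemma comp_zero: "comp A 0 = (\<lambda>_. 0)"
proof
  fix i
  obtain c where "is_decomp A c 0" "\<forall>j>i - 1. c j = 0"
    using zero_Le[of "i - 1"] Le_eq by blast
  then show "comp A 0 i = 0"
    using comp_eq[OF zero_M] by auto
qed

lemma zero_A: "0 \<in> A i"
  using comp_in[OF zero_M, of i] comp_zero by simp

lemma A_diff: "x \<in> A i \<Longrightarrow> y \<in> A i \<Longrightarrow> x - y \<in> A i"
  using A_add A_uminus by (metis diff_conv_add_uminus)

lemma A_sum: "finite S \<Longrightarrow> (\<And>k. k \<in> S \<Longrightarrow> f k \<in> A i) \<Longrightarrow> sum f S \<in> A i"
  by (induction S rule: finite_induct) (auto intro: zero_A A_add)

lemma comp_homogeneous: "x \<in> A i \<Longrightarrow> comp A x = (\<lambda>j. if j = i then x else 0)"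
  by (rule comp_eq[OF A_M], assumption, rule is_decompI[where S="{i}"]) (auto intro: zero_A)

lemma Le_iff: "x \<in> Le d \<longleftrightarrow> x \<in> M \<and> (\<forall>i>d. comp A x i = 0)"
proof
  assume x: "x \<in> Le d"
  then obtain c where "is_decomp A c x" "\<forall>i>d. c i = 0"
    using Le_eq by blast
  then show "x \<in> M \<and> (\<forall>i>d. comp A x i = 0)"
    using comp_eq Le_M[OF x] by auto
next
  assume "x \<in> M \<and> (\<forall>i>d. comp A x i = 0)"
  then show "x \<in> Le d"
    using Le_eq comp_is_decomp by blast
qed

lemma comp_sum_group:
  assumes "finite K" "\<And>k. k \<in> K \<Longrightarrow> f k \<in> A (g k)" "x = (\<Sum>k\<in>K. f k)"
  shows "comp A x = (\<lambda>d. \<Sum>k\<in>{k\<in>K. g k = d}. f k)"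
proof (rule comp_eq)
  show "x \<in> M"
    using assms by (auto intro: M_sum A_M)
  have "(\<Sum>d\<in>g ` K. \<Sum>k\<in>{k\<in>K. g k = d}. f k) = x"
    unfolding assms(3) by (rule sum.group[OF assms(1) finite_imageI[OF assms(1)] subset_refl])
  moreover have "{d. (\<Sum>k\<in>{k\<in>K. g k = d}. f k) \<noteq> 0} \<subseteq> g ` K"
  proof
    fix d assume "d \<in> {d. (\<Sum>k\<in>{k\<in>K. g k = d}. f k) \<noteq> 0}"
    then have "{k\<in>K. g k = d} \<noteq> {}"
      by (metis (mono_tags, lifting) mem_Collect_eq sum.empty)
    then show "d \<in> g ` K"
      by blast
  qed
  ultimately show "is_decomp A (\<lambda>d. \<Sum>k\<in>{k\<in>K. g k = d}. f k) x"
    using assms by (intro is_decompI[where S="g ` K"] A_sum) auto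
qed

lemma sum_comp_superset:
  assumes x: "x \<in> M" and S: "finite S" "{i. comp A x i \<noteq> 0} \<subseteq> S"
  shows "(\<Sum>i\<in>S. comp A x i) = x"
proof -
  have "(\<Sum>i\<in>S. comp A x i) = (\<Sum>i\<in>{i. comp A x i \<noteq> 0}. comp A x i)"
    by (rule sum.mono_neutral_right) (use S in auto)
  then show ?thesis
    using sum_comp[OF x] by simp
qed

lemma comp_add:
  assumes x: "x \<in> M" and y: "y \<in> M"
  shows "comp A (x + y) = comp A x + comp A y"
proof (rule comp_eq[OF M_add[OF x y]])
  let ?S = "{i. comp A x i \<noteq> 0} \<union> {i. comp A y i \<noteq> 0}"
  have S: "finite ?S"
    using comp_finite[OF x] comp_finite[OF y] by simp
  have "x + y = (\<Sum>i\<in>?S. comp A x i) + (\<Sum>i\<in>?S. comp A y i)"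
    using sum_comp_superset[OF x S] sum_comp_superset[OF y S] by simp
  also have "\<dots> = (\<Sum>i\<in>?S. (comp A x + comp A y) i)"
    by (simp add: sum.distrib)
  finally show "is_decomp A (comp A x + comp A y) (x + y)"
    using S comp_in[OF x] comp_in[OF y] A_add by (intro is_decompI[where S="?S"]) auto
qed

lemma comp_uminus:
  assumes x: "x \<in> M"
  shows "comp A (- x) = - comp A x"
proof -
  have "comp A x + comp A (- x) = 0"
    using comp_add[OF x M_uminus[OF x]] comp_zero by (simp add: zero_fun_def)
  then show ?thesis
    by (rule minus_unique[symmetric])
qed

lemma comp_diff: "x \<in> M \<Longrightarrow> y \<in> M \<Longrightarrow> comp A (x - y) = comp A x - comp A y"
  using comp_add[of x "- y"] comp_uminus[of y] M_uminus by (simp only: diff_conv_add_uminus)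

lemma Le_add: "x \<in> Le d \<Longrightarrow> y \<in> Le d \<Longrightarrow> x + y \<in> Le d"
  using Le_iff comp_add M_add by auto

lemma Le_diff: "x \<in> Le d \<Longrightarrow> y \<in> Le d \<Longrightarrow> x - y \<in> Le d"
  using Le_iff comp_diff M_diff by auto

lemma Le_sum: "finite S \<Longrightarrow> (\<And>k. k \<in> S \<Longrightarrow> f k \<in> Le d) \<Longrightarrow> sum f S \<in> Le d"
  by (induction S rule: finite_induct) (auto intro: zero_Le Le_add)

lemma Le_mono: "d \<le> d' \<Longrightarrow> x \<in> Le d \<Longrightarrow> x \<in> Le d'"
  using Le_iff by auto

lemma A_Le: "x \<in> A i \<Longrightarrow> x \<in> Le i"
  using Le_iff comp_homogeneous A_M by auto

lemma A_Le_pred_eq_0: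
  assumes "x \<in> A i" "x \<in> Le (i - 1)"
  shows "x = 0"
proof -
  have "comp A x i = 0"
    using assms(2) Le_iff by auto
  then show ?thesis
    using comp_homogeneous[OF assms(1)] by (simp add: fun_eq_iff)
qed

lemma Le_diff_comp_top:
  assumes x: "x \<in> Le d"
  shows "x - comp A x d \<in> Le (d - 1)"
proof -
  have xM: "x \<in> M" and cM: "comp A x d \<in> M"
    using Le_M[OF x] A_M comp_in by blast+
  have "comp A (x - comp A x d) i = comp A x i - (if i = d then comp A x d else 0)" for i
    using comp_diff[OF xM cM] comp_homogeneous[OF comp_in[OF xM]] by simp
  then show ?thesis
    using x M_diff[OF xM cM] unfolding Le_iff by auto
qed

lemma comp_inj:
  assumes "x \<in> M" "y \<in> M" "comp A x = comp A y"
  shows "x = y"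
  using sum_comp[OF assms(1)] sum_comp[OF assms(2)] unfolding assms(3) by (rule trans[OF sym])

definition coset :: "int \<Rightarrow> 'a \<Rightarrow> 'a set" where
  "coset d x = {x + z | z. z \<in> Le (d - 1)}"

definition gr :: "'a \<Rightarrow> int \<Rightarrow> 'a set" where
  "gr x = (\<lambda>d. coset d (comp A x d))"

definition gr_supp :: "(int \<Rightarrow> 'a set) \<Rightarrow> int set" where
  "gr_supp a = {d. a d \<noteq> Le (d - 1)}"

definition gr_carrier :: "(int \<Rightarrow> 'a set) set" where
  "gr_carrier = {a. (\<forall>d. \<exists>x\<in>Le d. a d = coset d x) \<and> finite (gr_supp a)}"

lemma mem_coset: "x \<in> coset d x"
  unfolding coset_def using zero_Le by force

lemma coset_eq_iff: "coset d x = coset d y \<longleftrightarrow> x - y \<in> Le (d - 1)"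
proof
  assume "coset d x = coset d y"
  then obtain z where "x = y + z" "z \<in> Le (d - 1)"
    using mem_coset[of x d] unfolding coset_def by auto
  then show "x - y \<in> Le (d - 1)"
    by simp
next
  assume xy: "x - y \<in> Le (d - 1)"
  have "x + z \<in> coset d y" if "z \<in> Le (d - 1)" for z
  proof -
    have "x + z = y + (x - y + z)"
      by simp
    then show ?thesis
      unfolding coset_def using Le_add[OF xy that] by blast
  qed
  moreover have "y + z \<in> coset d x" if "z \<in> Le (d - 1)" for z
  proof -
    have "y + z = x + (z - (x - y))"
      by simp
    then show ?thesis
      unfolding coset_def using Le_diff[OF that xy] by blast
  qed
  ultimately show "coset d x = coset d y"
    unfolding coset_def by blast
qed

lemma coset_eqI: "y - x \<in> Le (d - 1) \<Longrightarrow> coset d x = coset d y"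
  using coset_eq_iff by blast

lemma coset_eq_Le_iff: "coset d x = Le (d - 1) \<longleftrightarrow> x \<in> Le (d - 1)"
proof -
  have "coset d 0 = Le (d - 1)"
    unfolding coset_def by simp
  then show ?thesis
    using coset_eq_iff[of d x 0] by simp
qed

lemma rep_coset_diff: "rep (coset d x) - x \<in> Le (d - 1)"
proof -
  have "rep (coset d x) \<in> coset d x"
    unfolding rep_def using mem_coset by (rule someI)
  then show ?thesis
    unfolding coset_def by auto
qed

lemma rep_gr_diff: "rep (gr x d) - comp A x d \<in> Le (d - 1)"
  unfolding gr_def by (rule rep_coset_diff)

lemma gr_supp_gr:
  assumes x: "x \<in> M"
  shows "gr_supp (gr x) = {d. comp A x d \<noteq> 0}"
proof -
  have "gr x d = Le (d - 1) \<longleftrightarrow> comp A x d = 0" for d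
    unfolding gr_def coset_eq_Le_iff using A_Le_pred_eq_0[OF comp_in[OF x]] zero_Le by auto
  then show ?thesis
    unfolding gr_supp_def by auto
qed

lemma gr_in_carrier:
  assumes x: "x \<in> M"
  shows "gr x \<in> gr_carrier"
proof -
  have "\<forall>d. \<exists>y\<in>Le d. gr x d = coset d y"
    unfolding gr_def using A_Le[OF comp_in[OF x]] by blast
  then show ?thesis
    unfolding gr_carrier_def using gr_supp_gr[OF x] comp_finite[OF x] by simp
qed

lemma inj_on_gr: "inj_on gr M"
proof (rule inj_onI)
  fix x y assume x: "x \<in> M" and y: "y \<in> M" and eq: "gr x = gr y"
  have "comp A x d - comp A y d = 0" for d
  proof (rule A_Le_pred_eq_0)
    show "comp A x d - comp A y d \<in> A d"
      using A_diff comp_in x y by blast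
    show "comp A x d - comp A y d \<in> Le (d - 1)"
      using fun_cong[OF eq, of d] unfolding gr_def coset_eq_iff .
  qed
  then show "x = y"
    using comp_inj[OF x y] by (simp add: fun_eq_iff)
qed

text \<open>A preimage of \<open>a\<close> is the sum of the top components of representatives of its nonzero
  entries.\<close>

lemma gr_carrier_subset: "gr_carrier \<subseteq> gr ` M"
proof
  fix a assume a: "a \<in> gr_carrier"
  then have "\<forall>d. \<exists>y. y \<in> Le d \<and> a d = coset d y"
    unfolding gr_carrier_def by blast
  from choice[OF this] obtain y where y: "\<And>d. y d \<in> Le d" "\<And>d. a d = coset d (y d)"
    by blast
  let ?S = "gr_supp a"
  have S: "finite ?S"
    using a unfolding gr_carrier_def by blast
  define x where "x = (\<Sum>d\<in>?S. comp A (y d) d)"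
  have x: "x \<in> M"
    unfolding x_def using comp_in Le_M y(1) A_M by (intro M_sum[OF S]) blast
  have cx: "comp A x = (\<lambda>e. \<Sum>d\<in>{d\<in>?S. id d = e}. comp A (y d) d)"
    using comp_in[OF Le_M[OF y(1)]] by (intro comp_sum_group[OF S]) (auto simp: x_def)
  have "gr x e = a e" for e
  proof (cases "e \<in> ?S")
    case True
    then have "{d\<in>?S. id d = e} = {e}"
      by auto
    then have "gr x e = coset e (comp A (y e) e)"
      unfolding gr_def cx by simp
    also have "\<dots> = coset e (y e)"
      by (rule coset_eqI[OF Le_diff_comp_top[OF y(1)]])
    finally show ?thesis
      using y(2) by simp
  next
    case False
    then have E: "{d\<in>?S. id d = e} = {}"
      by auto
    have "comp A x e = 0"
      by (simp only: cx E sum.empty)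
    then show ?thesis
      using False unfolding gr_def gr_supp_def by (simp add: coset_eq_Le_iff zero_Le)
  qed
  then have "a = gr x"
    by auto
  with x show "a \<in> gr ` M"
    by blast
qed

lemma bij_betw_gr: "bij_betw gr M gr_carrier"
  unfolding bij_betw_def using inj_on_gr gr_in_carrier gr_carrier_subset by blast

lemma gr_add:
  assumes x: "x \<in> M" and y: "y \<in> M"
  shows "gr (x + y) = (\<lambda>d. coset d (rep (gr x d) + rep (gr y d)))"
proof
  fix d
  have "rep (gr x d) + rep (gr y d) - (comp A x d + comp A y d) \<in> Le (d - 1)"
    using Le_add[OF rep_gr_diff rep_gr_diff] by (simp add: algebra_simps)
  then show "gr (x + y) d = coset d (rep (gr x d) + rep (gr y d))"
    unfolding gr_def comp_add[OF x y] by (simp add: coset_eqI)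
qed

lemma gr_homogeneous:
  assumes "x \<in> A i"
  shows "gr x = (\<lambda>d. if d = i then coset i x else Le (d - 1))"
proof
  fix d
  show "gr x d = (if d = i then coset i x else Le (d - 1))"
    using coset_eq_Le_iff[of d 0] zero_Le unfolding gr_def comp_homogeneous[OF assms] by simp
qed

context
  fixes f :: "'a \<Rightarrow> 'a"
  assumes f_add: "\<And>y z. y \<in> M \<Longrightarrow> z \<in> M \<Longrightarrow> f (y + z) = f y + f z"
    and f_A: "\<And>i y. y \<in> A i \<Longrightarrow> f y \<in> A i"
begin

lemma f_zero: "f 0 = 0"
  using f_add[OF zero_M zero_M] by simp

lemma f_sum: "finite K \<Longrightarrow> (\<And>k. k \<in> K \<Longrightarrow> g k \<in> M) \<Longrightarrow> f (sum g K) = (\<Sum>k\<in>K. f (g k))"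
  by (induction K rule: finite_induct) (auto simp: f_zero f_add M_sum)

lemma f_diff: "y \<in> M \<Longrightarrow> z \<in> M \<Longrightarrow> f (y - z) = f y - f z"
  using f_add[of "y - z" z] M_diff by (simp add: eq_diff_eq)

lemma f_M:
  assumes x: "x \<in> M"
  shows "f x \<in> M"
proof -
  have "f x = (\<Sum>i\<in>{i. comp A x i \<noteq> 0}. f (comp A x i))"
    using f_sum[OF comp_finite[OF x]] sum_comp[OF x] comp_in[OF x] A_M by metis
  also have "\<dots> \<in> M"
    using comp_finite[OF x] comp_in[OF x] by (intro M_sum) (auto intro: A_M f_A)
  finally show ?thesis .
qed

lemma comp_f:
  assumes x: "x \<in> M"
  shows "comp A (f x) = (\<lambda>i. f (comp A x i))"
proof (rule comp_eq[OF f_M[OF x]])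
  let ?S = "{i. comp A x i \<noteq> 0}"
  have "f x = (\<Sum>i\<in>?S. f (comp A x i))"
    using f_sum[OF comp_finite[OF x]] sum_comp[OF x] comp_in[OF x] A_M by metis
  then show "is_decomp A (\<lambda>i. f (comp A x i)) (f x)"
    using comp_finite[OF x] comp_in[OF x]
    by (intro is_decompI[where S="?S"]) (auto simp: f_A f_zero)
qed

lemma f_Le: "z \<in> Le d \<Longrightarrow> f z \<in> Le d"
  using comp_f f_M f_zero unfolding Le_iff by auto

lemma gr_f:
  assumes x: "x \<in> M"
  shows "gr (f x) = (\<lambda>d. coset d (f (rep (gr x d))))"
proof
  fix d
  let ?r = "rep (gr x d)" and ?c = "comp A x d"
  have c: "?c \<in> M"
    using A_M comp_in[OF x] by blast
  have "?r - ?c \<in> Le (d - 1)"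
    by (rule rep_gr_diff)
  then have r: "?r \<in> M"
    using Le_M M_add[OF _ c] by fastforce
  have "f ?r - f ?c \<in> Le (d - 1)"
    using f_Le[OF rep_gr_diff[of x d]] unfolding f_diff[OF r c] .
  then show "gr (f x) d = coset d (f ?r)"
    unfolding gr_def comp_f[OF x] by (rule coset_eqI)
qed

end
end

section \<open>Graded pairings\<close>

locale graded_action =
  A: filtered_direct_sum A M LeA + B: filtered_direct_sum B N LeB
  for A :: "int \<Rightarrow> 'a::ab_group_add set" and M LeA
    and B :: "int \<Rightarrow> 'b::ab_group_add set" and N LeB +
  fixes act :: "'a \<Rightarrow> 'b \<Rightarrow> 'b"
  assumes act_add_left: "x \<in> M \<Longrightarrow> x' \<in> M \<Longrightarrow> y \<in> N \<Longrightarrow> act (x + x') y = act x y + act x' y"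
    and act_add_right: "x \<in> M \<Longrightarrow> y \<in> N \<Longrightarrow> y' \<in> N \<Longrightarrow> act x (y + y') = act x y + act x y'"
    and act_A_B: "x \<in> A i \<Longrightarrow> y \<in> B j \<Longrightarrow> act x y \<in> B (i + j)"
    and act_Le: "x \<in> LeA a \<Longrightarrow> y \<in> LeB b \<Longrightarrow> act x y \<in> LeB (a + b)"
begin

lemma act_zero_left: "y \<in> N \<Longrightarrow> act 0 y = 0"
  using act_add_left[OF A.zero_M A.zero_M] by simp

lemma act_zero_right: "x \<in> M \<Longrightarrow> act x 0 = 0"
  using act_add_right[OF _ B.zero_M B.zero_M] by simp

lemma act_sum_left:
  "finite K \<Longrightarrow> (\<And>k. k \<in> K \<Longrightarrow> f k \<in> M) \<Longrightarrow> y \<in> N \<Longrightarrow> act (sum f K) y = (\<Sum>k\<in>K. act (f k) y)"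
  by (induction K rule: finite_induct) (auto simp: act_zero_left act_add_left A.M_sum)

lemma act_sum_right:
  "finite K \<Longrightarrow> (\<And>k. k \<in> K \<Longrightarrow> g k \<in> N) \<Longrightarrow> x \<in> M \<Longrightarrow> act x (sum g K) = (\<Sum>k\<in>K. act x (g k))"
  by (induction K rule: finite_induct) (auto simp: act_zero_right act_add_right B.M_sum)

lemma comp_act:
  assumes x: "x \<in> M" and y: "y \<in> N"
  shows "comp B (act x y) e = (\<Sum>i\<in>{i. comp A x i \<noteq> 0}. act (comp A x i) (comp B y (e - i)))"
proof -
  let ?I = "{i. comp A x i \<noteq> 0}" and ?J = "{j. comp B y j \<noteq> 0}"
  let ?f = "\<lambda>i j. act (comp A x i) (comp B y j)"
  have I: "finite ?I" and J: "finite ?J"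
    using A.comp_finite[OF x] B.comp_finite[OF y] .
  have xi: "comp A x i \<in> M" and yj: "comp B y j \<in> N" for i j
    using A.A_M[OF A.comp_in[OF x]] B.A_M[OF B.comp_in[OF y]] .
  have "act x y = act (\<Sum>i\<in>?I. comp A x i) (\<Sum>j\<in>?J. comp B y j)"
    by (simp only: A.sum_comp[OF x] B.sum_comp[OF y])
  also have "\<dots> = (\<Sum>i\<in>?I. act (comp A x i) (\<Sum>j\<in>?J. comp B y j))"
    using xi B.M_sum[OF J yj] by (rule act_sum_left[OF I])
  also have "\<dots> = (\<Sum>i\<in>?I. \<Sum>j\<in>?J. ?f i j)"
    using yj xi by (intro sum.cong refl act_sum_right[OF J])
  also have "\<dots> = (\<Sum>p\<in>?I \<times> ?J. ?f (fst p) (snd p))"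
    by (simp add: sum.cartesian_product split_beta)
  finally have "comp B (act x y) = (\<lambda>e. \<Sum>p\<in>{p\<in>?I \<times> ?J. fst p + snd p = e}. ?f (fst p) (snd p))"
    using I J act_A_B A.comp_in[OF x] B.comp_in[OF y] by (intro B.comp_sum_group) auto
  then have "comp B (act x y) e = (\<Sum>p\<in>{p\<in>?I \<times> ?J. fst p + snd p = e}. ?f (fst p) (snd p))"
    by simp
  also have "\<dots> = (\<Sum>i\<in>?I. ?f i (e - i))"
    using act_zero_right[OF xi] by (intro sum_antidiagonal[OF I J]) auto
  finally show ?thesis .
qed

lemma act_perturb:
  assumes x: "x \<in> LeA a" and y: "y \<in> LeB b"
    and u: "u \<in> LeA (a - 1)" and v: "v \<in> LeB (b - 1)"
  shows "act (x + u) (y + v) - act x y \<in> LeB (a + b - 1)"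
proof -
  have xM: "x \<in> M" and uM: "u \<in> M" and yN: "y \<in> N" and vN: "v \<in> N"
    using A.Le_M x u B.Le_M y v by blast+
  have yv: "y + v \<in> LeB b"
    using B.Le_add[OF y B.Le_mono[OF _ v]] by simp
  have "act (x + u) (y + v) - act x y = act x v + act u (y + v)"
    using act_add_left[OF xM uM B.Le_M[OF yv]] act_add_right[OF xM yN vN] by simp
  moreover have "act x v \<in> LeB (a + b - 1)"
    using act_Le[OF x v] by (simp add: algebra_simps)
  moreover have "act u (y + v) \<in> LeB (a + b - 1)"
    using act_Le[OF u yv] by (simp add: algebra_simps)
  ultimately show ?thesis
    using B.Le_add by simp
qed

lemma gr_act:
  assumes x: "x \<in> M" and y: "y \<in> N"
  shows "B.gr (act x y) =
    (\<lambda>e. B.coset e (\<Sum>d\<in>A.gr_supp (A.gr x). act (rep (A.gr x d)) (rep (B.gr y (e - d)))))"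
proof
  fix e
  let ?I = "{i. comp A x i \<noteq> 0}"
  have "act (rep (A.gr x d)) (rep (B.gr y (e - d))) - act (comp A x d) (comp B y (e - d))
      \<in> LeB (e - 1)" for d
    using act_perturb[OF A.A_Le[OF A.comp_in[OF x]] B.A_Le[OF B.comp_in[OF y]]
        A.rep_gr_diff[of x d] B.rep_gr_diff[of y "e - d"]]
    by simp
  then have "(\<Sum>d\<in>?I. act (rep (A.gr x d)) (rep (B.gr y (e - d))))
      - (\<Sum>d\<in>?I. act (comp A x d) (comp B y (e - d))) \<in> LeB (e - 1)"
    unfolding sum_subtractf[symmetric] by (intro B.Le_sum A.comp_finite[OF x])
  then show "B.gr (act x y) e =
      B.coset e (\<Sum>d\<in>A.gr_supp (A.gr x). act (rep (A.gr x d)) (rep (B.gr y (e - d))))"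
    unfolding B.gr_def comp_act[OF x y] A.gr_supp_gr[OF x] by (rule B.coset_eqI)
qed

end

section \<open>The algebra of difference operators\<close>

lemma fn_smul_add: "fn_smul c (g + h) = fn_smul c g + fn_smul c h"
  unfolding fn_smul_def by (simp add: fun_eq_iff algebra_simps)

lemma fn_smul_add_left: "fn_smul (a + b) g = fn_smul a g + fn_smul b g"
  unfolding fn_smul_def by (simp add: fun_eq_iff algebra_simps)

lemma fn_smul_fn_smul: "fn_smul a (fn_smul b g) = fn_smul (a * b) g"
  unfolding fn_smul_def by (simp add: fun_eq_iff)

lemma fn_smul_zero: "fn_smul 0 g = 0" "fn_smul c 0 = 0"
  unfolding fn_smul_def by (simp_all add: fun_eq_iff)

lemma fn_smul_apply: "fn_smul c g z = c * g z"
  unfolding fn_smul_def ..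

lemma op_smul_apply: "op_smul c X g = fn_smul c (X g)"
  unfolding op_smul_def fn_smul_def ..

lemma op_smul_minus_one: "op_smul (-1) X = - X"
  unfolding op_smul_def by (simp add: fun_eq_iff)

lemma negf_add: "negf (g + h) = negf g + negf h"
  unfolding negf_def by (simp add: fun_eq_iff)

lemma negf_fn_smul: "negf (fn_smul c g) = fn_smul c (negf g)"
  unfolding negf_def fn_smul_def ..

lemma Lformula_add: "Lformula W l \<rho> (p + q) z = Lformula W l \<rho> p z + Lformula W l \<rho> q z"
  unfolding Lformula_def by (simp add: algebra_simps sum.distrib)

lemma Lformula_fn_smul: "Lformula W l \<rho> (fn_smul c p) z = c * Lformula W l \<rho> p z"
  unfolding Lformula_def fn_smul_def by (simp add: algebra_simps sum_distrib_left)

definition linear_on :: "('n::finite) fn set \<Rightarrow> 'n op \<Rightarrow> bool" where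
  "linear_on S X \<longleftrightarrow> (\<forall>g\<in>S. \<forall>h\<in>S. X (g + h) = X g + X h) \<and>
     (\<forall>c. \<forall>g\<in>S. X (fn_smul c g) = fn_smul c (X g))"

lemma linear_onD:
  "linear_on S X \<Longrightarrow> g \<in> S \<Longrightarrow> h \<in> S \<Longrightarrow> X (g + h) = X g + X h"
  "linear_on S X \<Longrightarrow> g \<in> S \<Longrightarrow> X (fn_smul c g) = fn_smul c (X g)"
  unfolding linear_on_def by blast+

lemma linear_on_mult: "linear_on S (mult h)"
  unfolding linear_on_def mult_def fn_smul_def by (simp add: fun_eq_iff algebra_simps)

lemma linear_on_add: "linear_on S X \<Longrightarrow> linear_on S Y \<Longrightarrow> linear_on S (X + Y)"
  unfolding linear_on_def by (simp add: fn_smul_add)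

lemma linear_on_diff: "linear_on S X \<Longrightarrow> linear_on S Y \<Longrightarrow> linear_on S (\<lambda>g. X g - Y g)"
  unfolding linear_on_def fn_smul_def by (simp add: fun_eq_iff algebra_simps)

lemma linear_on_op_smul: "linear_on S X \<Longrightarrow> linear_on S (op_smul c X)"
  unfolding linear_on_def op_smul_apply by (simp add: fn_smul_add fn_smul_fn_smul mult.commute)

lemma linear_on_comp:
  "linear_on S X \<Longrightarrow> linear_on S Y \<Longrightarrow> (\<And>g. g \<in> S \<Longrightarrow> Y g \<in> S) \<Longrightarrow> linear_on S (X \<circ> Y)"
  unfolding linear_on_def by simp

locale knop_setting =
  fixes W :: "(complex^('n::finite)^'n) set" and l \<rho> :: "complex^'n"
  assumes data: "knop_data W l"
    and L_pres: "L_preserves W l \<rho>"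
    and Pdec: "P_decomp W l \<rho>"
    and Bdec: "B_decomp W l \<rho>"
begin

lemma finite_W: "finite W"
  using data unfolding knop_data_def finite_reflection_group_def by blast

lemma PWle_mono: "d \<le> d' \<Longrightarrow> p \<in> PWle W d \<Longrightarrow> p \<in> PWle W d'"
  using Pdec unfolding P_decomp_def by force

lemma PW_add:
  assumes "p \<in> PW W" "q \<in> PW W"
  shows "p + q \<in> PW W"
proof -
  obtain d d' where "p \<in> PWle W d" "q \<in> PWle W d'"
    using assms PW_ex_PWle by blast
  then have "p + q \<in> PWle W (max d d')"
    using PWle_mono[OF max.cobounded1] PWle_mono[OF max.cobounded2] by (intro PWle_add)
  then show ?thesis
    unfolding PWle_def by blast
qed

lemma PW_fn_smul: "p \<in> PW W \<Longrightarrow> fn_smul c p \<in> PW W"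
  using PW_ex_PWle PWle_fn_smul unfolding PWle_def by blast

lemma PW_uminus: "p \<in> PW W \<Longrightarrow> - p \<in> PW W"
  using PW_fn_smul[of p "-1"] by (simp add: fn_smul_minus_one)

lemma zero_PW: "0 \<in> PW W"
  using zero_PWle unfolding PWle_def by blast

lemma PW_sum: "finite K \<Longrightarrow> (\<And>k. k \<in> K \<Longrightarrow> f k \<in> PW W) \<Longrightarrow> sum f K \<in> PW W"
  by (induction K rule: finite_induct) (auto intro: zero_PW PW_add)

lemma linear_on_restr: "linear_on (PW W) X \<Longrightarrow> linear_on (PW W) (restr W X)"
  unfolding linear_on_def restr_def by (simp add: PW_add PW_fn_smul)

lemma linear_on_sum:
  assumes X: "linear_on (PW W) X" and K: "finite K" and f: "\<And>k. k \<in> K \<Longrightarrow> f k \<in> PW W"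
  shows "X (sum f K) = (\<Sum>k\<in>K. X (f k))"
  using K f
proof (induction K rule: finite_induct)
  case empty
  have "X (fn_smul 0 0) = fn_smul 0 (X 0)"
    by (rule linear_onD(2)[OF X zero_PW])
  then show ?case
    by (simp only: fn_smul_zero sum.empty)
next
  case (insert k K)
  have "X (sum f (insert k K)) = X (f k + sum f K)"
    unfolding sum.insert[OF insert.hyps] ..
  also have "\<dots> = X (f k) + X (sum f K)"
    using insert.prems by (intro linear_onD(1)[OF X] PW_sum[OF insert.hyps(1)]) auto
  also have "X (sum f K) = (\<Sum>k\<in>K. X (f k))"
    using insert.prems by (intro insert.IH) auto
  finally show ?case
    unfolding sum.insert[OF insert.hyps] .
qed

lemma Lop_unique:
  assumes p: "p \<in> PW W" and q: "q \<in> PW W"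
    and eq: "\<And>z. regular_pt W l z \<Longrightarrow> q z = Lformula W l \<rho> p z"
  shows "Lop W l \<rho> p = q"
  unfolding Lop_def
proof (rule the_equality)
  show "q \<in> Polys \<and> (\<forall>z. regular_pt W l z \<longrightarrow> q z = Lformula W l \<rho> p z)"
    using q eq unfolding PW_def by blast
next
  fix q' assume q': "q' \<in> Polys \<and> (\<forall>z. regular_pt W l z \<longrightarrow> q' z = Lformula W l \<rho> p z)"
  show "q' = q"
    using q' q eq unfolding PW_def
    by (intro continuous_eq_if_eq_at_regular_pts[OF finite_W]) (auto intro: continuous_on_Polys)
qed

lemma Lop_spec:
  assumes "p \<in> PW W"
  shows "Lop W l \<rho> p \<in> PW W \<and> (\<forall>z. regular_pt W l z \<longrightarrow> Lop W l \<rho> p z = Lformula W l \<rho> p z)"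
proof -
  obtain q where "q \<in> PW W" "\<forall>z. regular_pt W l z \<longrightarrow> q z = Lformula W l \<rho> p z"
    using L_pres assms unfolding L_preserves_def by blast
  then show ?thesis
    using Lop_unique[OF assms] by auto
qed

lemma linear_Lop: "linear_on (PW W) (Lop W l \<rho>)"
  unfolding linear_on_def
proof (intro conjI ballI allI)
  fix g h assume g: "g \<in> PW W" and h: "h \<in> PW W"
  show "Lop W l \<rho> (g + h) = Lop W l \<rho> g + Lop W l \<rho> h"
    using Lop_spec[OF g] Lop_spec[OF h] by (intro Lop_unique PW_add g h) (auto simp: Lformula_add)
next
  fix c g assume g: "g \<in> PW W"
  show "Lop W l \<rho> (fn_smul c g) = fn_smul c (Lop W l \<rho> g)"
    using Lop_spec[OF g]
    by (intro Lop_unique PW_fn_smul g) (auto simp: Lformula_fn_smul fn_smul_apply)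
qed

lemma linear_Lminus: "linear_on (PW W) (Lminus W l \<rho>)"
  unfolding linear_on_def Lminus_def
  by (simp add: negf_add negf_fn_smul PW_negf linear_onD[OF linear_Lop])

lemma linear_Eop: "linear_on (PW W) (Eop W l \<rho>)"
  unfolding Eop_def by (intro linear_on_restr linear_on_diff linear_on_mult linear_Lop)

lemma Balg_Ble:
  assumes X: "X \<in> Balg W l \<rho>"
  shows "\<exists>d. X \<in> Ble W l \<rho> d"
proof -
  obtain c where c: "is_decomp (Bd W l \<rho>) c X"
    using Bdec X unfolding B_decomp_def by blast
  moreover obtain d where "\<forall>i>d. c i = 0"
    using is_decomp_bounded[OF c] by blast
  ultimately show ?thesis
    using Bdec unfolding B_decomp_def by blast
qed

lemma Balg_PW:
  assumes "X \<in> Balg W l \<rho>" "g \<in> PW W"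
  shows "X g \<in> PW W"
proof -
  obtain d e where "X \<in> Ble W l \<rho> d" "g \<in> PWle W e"
    using Balg_Ble PW_ex_PWle assms by blast
  then show ?thesis
    unfolding Ble_def PWle_def by blast
qed

lemma Balg_out: "X \<in> Balg W l \<rho> \<Longrightarrow> g \<notin> PW W \<Longrightarrow> X g = 0"
  by (induction X rule: Balg.induct) (auto simp: restr_def op_comp_def op_smul_def fun_eq_iff)

lemma linear_Balg: "X \<in> Balg W l \<rho> \<Longrightarrow> linear_on (PW W) X"
proof (induction rule: Balg.induct)
  case (B_comp X Y)
  then show ?case
    unfolding op_comp_def using Balg_PW by (intro linear_on_restr linear_on_comp) auto
next
  case (B_add X Y)
  show ?case
    using B_add.IH by (rule linear_on_add)
qed (auto intro: linear_on_restr linear_on_mult linear_Lop linear_Lminus linear_on_op_smul)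

lemma Balg_add: "X \<in> Balg W l \<rho> \<Longrightarrow> g \<in> PW W \<Longrightarrow> h \<in> PW W \<Longrightarrow> X (g + h) = X g + X h"
  using linear_onD(1)[OF linear_Balg] .

lemma Balg_fn_smul: "X \<in> Balg W l \<rho> \<Longrightarrow> g \<in> PW W \<Longrightarrow> X (fn_smul c g) = fn_smul c (X g)"
  using linear_onD(2)[OF linear_Balg] .

lemma zero_Balg: "0 \<in> Balg W l \<rho>"
proof -
  have "op_smul 0 (restr W (Lop W l \<rho>)) \<in> Balg W l \<rho>"
    by (intro B_smul B_L)
  then show ?thesis
    by (simp add: op_smul_def fun_eq_iff zero_fun_def)
qed

lemma Balg_uminus:
  assumes "X \<in> Balg W l \<rho>"
  shows "- X \<in> Balg W l \<rho>"
  using B_smul[OF assms, of "-1"] unfolding op_smul_minus_one .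

lemma restr_id_Balg: "restr W id \<in> Balg W l \<rho>"
proof -
  have "mult 1 = id"
    unfolding mult_def by (simp add: fun_eq_iff)
  then show ?thesis
    using B_mult[OF one_PW] by metis
qed

lemma Pd_iff: "h \<in> Pd W l \<rho> d \<longleftrightarrow> h \<in> PW W \<and> Eop W l \<rho> h = fn_smul (of_int d + pair l \<rho>) h"
  unfolding Pd_def fn_smul_def by simp

sublocale P: filtered_direct_sum "Pd W l \<rho>" "PW W" "PWle W"
proof
  show "\<exists>!c. is_decomp (Pd W l \<rho>) c h" if "h \<in> PW W" for h
    using Pdec that unfolding P_decomp_def by blast
  show "PWle W d = {h. \<exists>c. is_decomp (Pd W l \<rho>) c h \<and> (\<forall>i>d. c i = 0)}" for d
    using Pdec unfolding P_decomp_def by blast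
  show "h \<in> PW W" if "h \<in> Pd W l \<rho> i" for h i
    using that Pd_iff by blast
  show "h \<in> PW W" if "h \<in> PWle W d" for h d
    using that unfolding PWle_def by blast
  show "0 \<in> PWle W d" for d
    by (rule zero_PWle)
  show "g + h \<in> Pd W l \<rho> i" if "g \<in> Pd W l \<rho> i" "h \<in> Pd W l \<rho> i" for g h i
    using that linear_onD(1)[OF linear_Eop] unfolding Pd_iff by (simp add: PW_add fn_smul_add)
  show "- h \<in> Pd W l \<rho> i" if "h \<in> Pd W l \<rho> i" for h i
    using that linear_onD(2)[OF linear_Eop, of h "-1"] unfolding Pd_iff
    by (simp add: PW_fn_smul fn_smul_minus_one[symmetric] fn_smul_fn_smul mult.commute)
  show "g + h \<in> PW W" if "g \<in> PW W" "h \<in> PW W" for g h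
    using that by (rule PW_add)
  show "- h \<in> PW W" if "h \<in> PW W" for h
    using that by (rule PW_uminus)
qed

lemma Eop_PW:
  assumes g: "g \<in> PW W"
  shows "Eop W l \<rho> g \<in> PW W"
proof -
  let ?c = "comp (Pd W l \<rho>) g" and ?S = "{i. comp (Pd W l \<rho>) g i \<noteq> 0}"
  have c: "?c i \<in> PW W" for i
    using P.comp_in[OF g] P.A_M by blast
  have "Eop W l \<rho> (\<Sum>i\<in>?S. ?c i) = (\<Sum>i\<in>?S. Eop W l \<rho> (?c i))"
    by (rule linear_on_sum[OF linear_Eop P.comp_finite[OF g] c])
  then have "Eop W l \<rho> g = (\<Sum>i\<in>?S. Eop W l \<rho> (?c i))"
    unfolding P.sum_comp[OF g] .
  also have "\<dots> = (\<Sum>i\<in>?S. fn_smul (of_int i + pair l \<rho>) (?c i))"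
    using P.comp_in[OF g] Pd_iff by (intro sum.cong refl) blast
  also have "\<dots> \<in> PW W"
    using P.comp_finite[OF g] c by (intro PW_sum PW_fn_smul)
  finally show ?thesis .
qed

lemma Bd_iff:
  "X \<in> Bd W l \<rho> d \<longleftrightarrow> X \<in> Balg W l \<rho> \<and>
     (\<forall>g\<in>PW W. Eop W l \<rho> (X g) = X (Eop W l \<rho> g) + fn_smul (of_int d) (X g))"
proof -
  have "op_comp W (Eop W l \<rho>) X - op_comp W X (Eop W l \<rho>) = op_smul (of_int d) X \<longleftrightarrow>
      (\<forall>g\<in>PW W. Eop W l \<rho> (X g) = X (Eop W l \<rho> g) + fn_smul (of_int d) (X g))"
    if X: "X \<in> Balg W l \<rho>"
    unfolding fun_eq_iff op_comp_def restr_def op_smul_def fn_smul_def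
    using Balg_out[OF X] by (auto simp: algebra_simps)
  then show ?thesis
    unfolding Bd_def by blast
qed

lemma Bd_add:
  assumes X: "X \<in> Bd W l \<rho> d" and Y: "Y \<in> Bd W l \<rho> d"
  shows "X + Y \<in> Bd W l \<rho> d"
proof -
  have XY: "X \<in> Balg W l \<rho>" "Y \<in> Balg W l \<rho>"
    using X Y Bd_iff by blast+
  have "Eop W l \<rho> ((X + Y) g) = (X + Y) (Eop W l \<rho> g) + fn_smul (of_int d) ((X + Y) g)"
    if g: "g \<in> PW W" for g
    using X Y g linear_onD(1)[OF linear_Eop Balg_PW[OF XY(1) g] Balg_PW[OF XY(2) g]]
    unfolding Bd_iff by (simp add: fn_smul_add algebra_simps)
  then show ?thesis
    using XY Bd_iff B_add by blast
qed

lemma Bd_op_smul: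
  assumes X: "X \<in> Bd W l \<rho> d"
  shows "op_smul c X \<in> Bd W l \<rho> d"
proof -
  have XB: "X \<in> Balg W l \<rho>"
    using X Bd_iff by blast
  have "Eop W l \<rho> (op_smul c X g) = op_smul c X (Eop W l \<rho> g) + fn_smul (of_int d) (op_smul c X g)"
    if g: "g \<in> PW W" for g
    using X g linear_onD(2)[OF linear_Eop Balg_PW[OF XB g]] unfolding Bd_iff op_smul_apply
    by (simp add: fn_smul_add fn_smul_fn_smul mult.commute)
  then show ?thesis
    using XB Bd_iff B_smul by blast
qed

lemma Bd_op_comp:
  assumes X: "X \<in> Bd W l \<rho> i" and Y: "Y \<in> Bd W l \<rho> j"
  shows "op_comp W X Y \<in> Bd W l \<rho> (i + j)"
proof -
  have XB: "X \<in> Balg W l \<rho>" and YB: "Y \<in> Balg W l \<rho>"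
    using X Y Bd_iff by blast+
  have "Eop W l \<rho> (X (Y g)) = X (Y (Eop W l \<rho> g)) + fn_smul (of_int (i + j)) (X (Y g))"
    if g: "g \<in> PW W" for g
  proof -
    have Yg: "Y g \<in> PW W" and YEg: "Y (Eop W l \<rho> g) \<in> PW W"
      using Balg_PW[OF YB] g Eop_PW by blast+
    have "Eop W l \<rho> (X (Y g)) = X (Eop W l \<rho> (Y g)) + fn_smul (of_int i) (X (Y g))"
      using X Yg unfolding Bd_iff by blast
    also have "Eop W l \<rho> (Y g) = Y (Eop W l \<rho> g) + fn_smul (of_int j) (Y g)"
      using Y g unfolding Bd_iff by blast
    also have "X \<dots> = X (Y (Eop W l \<rho> g)) + fn_smul (of_int j) (X (Y g))"
      unfolding Balg_add[OF XB YEg PW_fn_smul[OF Yg]] Balg_fn_smul[OF XB Yg] ..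
    finally show ?thesis
      unfolding of_int_add fn_smul_add_left by (simp only: add_ac)
  qed
  then show ?thesis
    using XB YB Bd_iff B_comp Eop_PW by (simp add: op_comp_def restr_def)
qed

lemma Bd_apply_Pd:
  assumes X: "X \<in> Bd W l \<rho> i" and h: "h \<in> Pd W l \<rho> j"
  shows "X h \<in> Pd W l \<rho> (i + j)"
proof -
  have XB: "X \<in> Balg W l \<rho>" and hP: "h \<in> PW W"
    using X h Bd_iff Pd_iff by blast+
  have "Eop W l \<rho> (X h) = X (fn_smul (of_int j + pair l \<rho>) h) + fn_smul (of_int i) (X h)"
    using X h hP unfolding Bd_iff Pd_iff by simp
  then have "Eop W l \<rho> (X h) = fn_smul (of_int (i + j) + pair l \<rho>) (X h)"
    by (simp add: Balg_fn_smul[OF XB hP] fn_smul_add_left[symmetric] algebra_simps)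
  then show ?thesis
    using Balg_PW[OF XB hP] Pd_iff by blast
qed

lemma restr_id_Bd: "restr W id \<in> Bd W l \<rho> 0"
  unfolding Bd_iff using restr_id_Balg Eop_PW by (simp add: restr_def fn_smul_zero)

sublocale B: filtered_direct_sum "Bd W l \<rho>" "Balg W l \<rho>" "Ble W l \<rho>"
proof
  show "\<exists>!c. is_decomp (Bd W l \<rho>) c X" if "X \<in> Balg W l \<rho>" for X
    using Bdec that unfolding B_decomp_def by blast
  show "Ble W l \<rho> d = {X. \<exists>c. is_decomp (Bd W l \<rho>) c X \<and> (\<forall>i>d. c i = 0)}" for d
    using Bdec unfolding B_decomp_def by blast
  show "X \<in> Balg W l \<rho>" if "X \<in> Bd W l \<rho> i" for X i
    using that Bd_iff by blast
  show "X \<in> Balg W l \<rho>" if "X \<in> Ble W l \<rho> d" for X d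
    using that unfolding Ble_def by blast
  show "0 \<in> Ble W l \<rho> d" for d
    unfolding Ble_def using zero_Balg by (simp add: zero_PWle)
  show "X + Y \<in> Bd W l \<rho> i" if "X \<in> Bd W l \<rho> i" "Y \<in> Bd W l \<rho> i" for X Y i
    using that by (rule Bd_add)
  show "- X \<in> Bd W l \<rho> i" if "X \<in> Bd W l \<rho> i" for X i
    using Bd_op_smul[OF that, of "-1"] unfolding op_smul_minus_one .
  show "X + Y \<in> Balg W l \<rho>" if "X \<in> Balg W l \<rho>" "Y \<in> Balg W l \<rho>" for X Y
    using that by (rule B_add)
  show "- X \<in> Balg W l \<rho>" if "X \<in> Balg W l \<rho>" for X
    using that by (rule Balg_uminus)
qed

lemma Ble_op_comp:
  assumes X: "X \<in> Ble W l \<rho> a" and Y: "Y \<in> Ble W l \<rho> b"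
  shows "op_comp W X Y \<in> Ble W l \<rho> (a + b)"
proof -
  have "op_comp W X Y h \<in> PWle W (e + (a + b))" if h: "h \<in> PWle W e" for e h
  proof -
    have "X (Y h) \<in> PWle W (e + b + a)"
      using X Y h unfolding Ble_def by blast
    then show ?thesis
      using h unfolding op_comp_def restr_def PWle_def by (simp add: algebra_simps)
  qed
  moreover have "op_comp W X Y \<in> Balg W l \<rho>"
    using X Y unfolding Ble_def by (blast intro: B_comp)
  ultimately show ?thesis
    unfolding Ble_def by blast
qed

sublocale BB: graded_action "Bd W l \<rho>" "Balg W l \<rho>" "Ble W l \<rho>" "Bd W l \<rho>" "Balg W l \<rho>"
  "Ble W l \<rho>" "op_comp W"
proof
  show "op_comp W (X + X') Y = op_comp W X Y + op_comp W X' Y" for X X' Y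
    unfolding op_comp_def restr_def by (simp add: fun_eq_iff)
  show "op_comp W X (Y + Y') = op_comp W X Y + op_comp W X Y'"
    if "X \<in> Balg W l \<rho>" "Y \<in> Balg W l \<rho>" "Y' \<in> Balg W l \<rho>" for X Y Y'
    using that Balg_add Balg_PW unfolding op_comp_def restr_def by (simp add: fun_eq_iff)
  show "op_comp W X Y \<in> Bd W l \<rho> (i + j)" if "X \<in> Bd W l \<rho> i" "Y \<in> Bd W l \<rho> j" for X Y i j
    using that by (rule Bd_op_comp)
  show "op_comp W X Y \<in> Ble W l \<rho> (a + b)" if "X \<in> Ble W l \<rho> a" "Y \<in> Ble W l \<rho> b" for X Y a b
    using that by (rule Ble_op_comp)
qed

sublocale BP: graded_action "Bd W l \<rho>" "Balg W l \<rho>" "Ble W l \<rho>" "Pd W l \<rho>" "PW W" "PWle W"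
  "\<lambda>X h. X h"
proof
  show "(X + X') h = X h + X' h" for X X' h
    by simp
  show "X (g + h) = X g + X h" if "X \<in> Balg W l \<rho>" "g \<in> PW W" "h \<in> PW W" for X g h
    using that by (rule Balg_add)
  show "X h \<in> Pd W l \<rho> (i + j)" if "X \<in> Bd W l \<rho> i" "h \<in> Pd W l \<rho> j" for X h i j
    using that by (rule Bd_apply_Pd)
  show "X h \<in> PWle W (a + b)" if "X \<in> Ble W l \<rho> a" "h \<in> PWle W b" for X h a b
  proof -
    have "X h \<in> PWle W (b + a)"
      using that unfolding Ble_def by blast
    then show ?thesis
      by (simp only: add.commute)
  qed
qed

lemma bcos_eq_coset: "bcos W l \<rho> = B.coset"
  unfolding bcos_def B.coset_def ..

lemma pcos_eq_coset: "pcos W = P.coset"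
  unfolding pcos_def P.coset_def ..

lemma bsupp_eq_gr_supp: "bsupp W l \<rho> = B.gr_supp"
  unfolding bsupp_def B.gr_supp_def ..

lemma Psi_eq_gr: "Psi W l \<rho> = B.gr"
  unfolding Psi_def B.gr_def bcos_eq_coset ..

lemma psi_eq_gr: "psi W l \<rho> = P.gr"
  unfolding psi_def P.gr_def pcos_eq_coset ..

lemma Bbar_eq_gr_carrier: "Bbar W l \<rho> = B.gr_carrier"
  unfolding Bbar_def B.gr_carrier_def bcos_eq_coset bsupp_eq_gr_supp ..

lemma Psi_add:
  "X \<in> Balg W l \<rho> \<Longrightarrow> Y \<in> Balg W l \<rho> \<Longrightarrow>
    Psi W l \<rho> (X + Y) = badd W l \<rho> (Psi W l \<rho> X) (Psi W l \<rho> Y)"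
  unfolding Psi_eq_gr badd_def bcos_eq_coset by (rule B.gr_add)

lemma Psi_op_smul: "X \<in> Balg W l \<rho> \<Longrightarrow> Psi W l \<rho> (op_smul c X) = bsmul W l \<rho> c (Psi W l \<rho> X)"
  unfolding Psi_eq_gr bsmul_def bcos_eq_coset
  by (rule B.gr_f[OF _ Bd_op_smul]) (simp_all add: op_smul_def fun_eq_iff algebra_simps)

lemma Psi_op_comp:
  "X \<in> Balg W l \<rho> \<Longrightarrow> Y \<in> Balg W l \<rho> \<Longrightarrow>
    Psi W l \<rho> (op_comp W X Y) = bmul W l \<rho> (Psi W l \<rho> X) (Psi W l \<rho> Y)"
  unfolding Psi_eq_gr bmul_def bcos_eq_coset bsupp_eq_gr_supp by (rule BB.gr_act)

lemma Psi_restr_id: "Psi W l \<rho> (restr W id) = bone W l \<rho>"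
  unfolding Psi_eq_gr bone_def bcos_eq_coset by (rule B.gr_homogeneous[OF restr_id_Bd])

lemma psi_apply:
  "X \<in> Balg W l \<rho> \<Longrightarrow> h \<in> PW W \<Longrightarrow>
    psi W l \<rho> (X h) = bact W l \<rho> (Psi W l \<rho> X) (psi W l \<rho> h)"
  unfolding psi_eq_gr Psi_eq_gr bact_def pcos_eq_coset bsupp_eq_gr_supp by (rule BP.gr_act)

end

theorem theorem8p3:
  fixes W :: "(complex^('n::finite)^'n) set" and l \<rho> :: "complex^'n"
  assumes data: "knop_data W l"
    and L_pres: "L_preserves W l \<rho>"
    and Pdec: "P_decomp W l \<rho>"
    and Bdec: "B_decomp W l \<rho>"
    and rho: "\<rho> \<in> V0 W" "dominant W \<rho>"
  shows "bij_betw (Psi W l \<rho>) (Balg W l \<rho>) (Bbar W l \<rho>)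
    \<and> (\<forall>X\<in>Balg W l \<rho>. \<forall>Y\<in>Balg W l \<rho>. Psi W l \<rho> (X + Y) = badd W l \<rho> (Psi W l \<rho> X) (Psi W l \<rho> Y))
    \<and> (\<forall>c. \<forall>X\<in>Balg W l \<rho>. Psi W l \<rho> (op_smul c X) = bsmul W l \<rho> c (Psi W l \<rho> X))
    \<and> (\<forall>X\<in>Balg W l \<rho>. \<forall>Y\<in>Balg W l \<rho>.
         Psi W l \<rho> (op_comp W X Y) = bmul W l \<rho> (Psi W l \<rho> X) (Psi W l \<rho> Y))
    \<and> Psi W l \<rho> (restr W id) = bone W l \<rho>
    \<and> (\<forall>X\<in>Balg W l \<rho>. \<forall>h\<in>PW W. psi W l \<rho> (X h) = bact W l \<rho> (Psi W l \<rho> X) (psi W l \<rho> h))"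
proof -
  \<comment> \<open>The hypotheses \<open>rho\<close> are what the paper needs to establish \<open>Pdec\<close> and \<open>Bdec\<close>.\<close>
  interpret knop_setting W l \<rho>
    using data L_pres Pdec Bdec by unfold_locales
  show ?thesis
    using B.bij_betw_gr Psi_add Psi_op_smul Psi_op_comp Psi_restr_id psi_apply
    unfolding Psi_eq_gr Bbar_eq_gr_carrier by blast
qed

end
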